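(* Let $p\ge2$, $A\in\mathcal{B}_I(p)$ with common between-group parameter $c$, let $\alpha_k=\frac1{n_k}+\frac{n_k-1}{n_k}b_k$ and $\alpha^\star=\min_{1\le k\le p}\alpha_k$. If $0<\alpha_k<1$ for all $k\in\{1,\dots,p\}$ and $-\frac{\alpha^\star}{p-1}<c<\alpha^\star$, then $A\succ 0$.
   Context: All matrices are real; $\succ 0$ means positive definite. $J_m$ is the $m\times m$ matrix of ones, $J_{m,q}=\mathbf 1_m\mathbf 1_q^\top$. For $n_1,\dots,n_p\ge1$, $n=\sum n_k$, $\mathcal{B}_I(p)$ is the set of symmetric $n\times n$ block matrices $A=(A_{k,\ell})$ (block $A_{k,\ell}$ of size $n_k\times n_\ell$) with diagonal blocks $A_{k,k}=(1-b_k)I_{n_k}+b_kJ_{n_k}$ and off-diagonal blocks $A_{k,\ell}=cJ_{n_k,n_\ell}$ ($k\ne\ell$), where $b_k,c\in]-1,1[$ and $b_k=0$ if $n_k=1$. *)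

theory Defs
  imports Complex_Main
begin

text \<open>Group sizes n_0,...,n_{p-1} are given by a function n :: nat => nat (groups indexed 0..p-1).
 An n x n real matrix is a function nat => nat => real on indices below N = sum of the n_k.\<close>

definition offs :: "(nat \<Rightarrow> nat) \<Rightarrow> nat \<Rightarrow> nat" where
  "offs n k = (\<Sum>l<k. n l)"

definition in_block :: "(nat \<Rightarrow> nat) \<Rightarrow> nat \<Rightarrow> nat \<Rightarrow> bool" where
  "in_block n k r \<longleftrightarrow> offs n k \<le> r \<and> r < offs n (Suc k)"

definition in_BI :: "nat \<Rightarrow> (nat \<Rightarrow> nat) \<Rightarrow> (nat \<Rightarrow> real) \<Rightarrow> real
    \<Rightarrow> (nat \<Rightarrow> nat \<Rightarrow> real) \<Rightarrow> bool" where
  "in_BI p n b c A \<longleftrightarrow>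
     (\<forall>k<p. n k \<ge> 1) \<and>
     (\<forall>k<p. -1 < b k \<and> b k < 1) \<and> -1 < c \<and> c < 1 \<and>
     (\<forall>k<p. n k = 1 \<longrightarrow> b k = 0) \<and>
     (\<forall>k<p. \<forall>l<p. \<forall>r s. in_block n k r \<and> in_block n l s \<longrightarrow>
        A r s = (if k = l then (1 - b k) * (if r = s then 1 else 0) + b k else c))"

definition pos_def :: "nat \<Rightarrow> (nat \<Rightarrow> nat \<Rightarrow> real) \<Rightarrow> bool" where
  "pos_def N A \<longleftrightarrow> (\<forall>i<N. \<forall>j<N. A i j = A j i) \<and>
     (\<forall>x :: nat \<Rightarrow> real. (\<exists>i<N. x i \<noteq> 0) \<longrightarrow> (\<Sum>i<N. \<Sum>j<N. x i * A i j * x j) > 0)"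

definition alpha :: "(nat \<Rightarrow> nat) \<Rightarrow> (nat \<Rightarrow> real) \<Rightarrow> nat \<Rightarrow> real" where
  "alpha n b k = 1 / real (n k) + (real (n k) - 1) / real (n k) * b k"

end

theory Submission
  imports Defs "HOL-Analysis.Convex"
begin

text \<open>Write \<open>S\<^sub>k\<close> and \<open>Q\<^sub>k\<close> for the sum and the sum of squares of the
  entries of \<open>x\<close> in group \<open>k\<close>. Then
  \<open>x\<^sup>T A x = c (\<Sum>\<^sub>k S\<^sub>k)\<^sup>2 + \<Sum>\<^sub>k ((1 - b\<^sub>k) Q\<^sub>k + (b\<^sub>k - c) S\<^sub>k\<^sup>2)\<close>,
  and the root-mean-square inequality \<open>S\<^sub>k\<^sup>2 \<le> n\<^sub>k Q\<^sub>k\<close> bounds the \<open>k\<close>-th summand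
  from below by \<open>(\<alpha>\<^sub>k - c) S\<^sub>k\<^sup>2\<close>. The remaining form
  \<open>c (\<Sum>\<^sub>k S\<^sub>k)\<^sup>2 + \<Sum>\<^sub>k (\<alpha>\<^sub>k - c) S\<^sub>k\<^sup>2\<close> is positive definite in \<open>S\<close>: for
  \<open>c \<ge> 0\<close> because \<open>c < \<alpha>\<^sup>\<star>\<close>, for \<open>c < 0\<close> by Cauchy-Schwarz and
  \<open>\<alpha>\<^sup>\<star> + (p - 1) c > 0\<close>. If all \<open>S\<^sub>k\<close> vanish, the form reduces to
  \<open>\<Sum>\<^sub>k (1 - b\<^sub>k) Q\<^sub>k > 0\<close>.\<close>

definition block :: "(nat \<Rightarrow> nat) \<Rightarrow> nat \<Rightarrow> nat set" where
  "block n k = {offs n k..<offs n (Suc k)}"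

lemma in_block_iff_mem_block: "in_block n k r \<longleftrightarrow> r \<in> block n k"
  by (simp add: in_block_def block_def)

lemma finite_block [simp]: "finite (block n k)"
  by (simp add: block_def)

lemma card_block [simp]: "card (block n k) = n k"
  by (simp add: block_def offs_def)

lemma offs_eq_sum: "offs n p = (\<Sum>k<p. n k)"
  by (simp add: offs_def)

lemma sum_lessThan_offs_blocks:
  "(\<Sum>i<offs n p. f i) = (\<Sum>k<p. \<Sum>i\<in>block n k. f i)"
proof (induction p)
  case 0
  then show ?case by (simp add: offs_def)
next
  case (Suc p)
  have "offs n p \<le> offs n (Suc p)"
    by (simp add: offs_def)
  then have "(\<Sum>i<offs n (Suc p). f i) = (\<Sum>i<offs n p. f i) + (\<Sum>i\<in>block n p. f i)"
    unfolding block_def by (metis atLeast0LessThan sum.atLeastLessThan_concat zero_le)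
  with Suc.IH show ?case by simp
qed

lemma ex_block_lessThan_offs: "i < offs n p \<Longrightarrow> \<exists>k<p. i \<in> block n k"
proof (induction p)
  case 0
  then show ?case by (simp add: offs_def)
next
  case (Suc p)
  then show ?case
    by (cases "i < offs n p") (auto simp: block_def not_less less_Suc_eq)
qed

lemma compound_symmetry_quadratic_form:
  fixes x :: "'a \<Rightarrow> real"
  assumes "finite B"
  shows "(\<Sum>i\<in>B. \<Sum>j\<in>B. x i * ((1 - \<beta>) * (if i = j then 1 else 0) + \<beta>) * x j)
    = (1 - \<beta>) * (\<Sum>i\<in>B. (x i)\<^sup>2) + \<beta> * (\<Sum>i\<in>B. x i)\<^sup>2"
proof -
  have row: "(\<Sum>j\<in>B. x i * ((1 - \<beta>) * (if i = j then 1 else 0) + \<beta>) * x j)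
      = (1 - \<beta>) * (x i)\<^sup>2 + \<beta> * (x i * (\<Sum>j\<in>B. x j))" if "i \<in> B" for i
  proof -
    have "(\<Sum>j\<in>B. x i * ((1 - \<beta>) * (if i = j then 1 else 0) + \<beta>) * x j)
        = (\<Sum>j\<in>B. (1 - \<beta>) * (if i = j then x i * x j else 0) + \<beta> * (x i * x j))"
      by (intro sum.cong refl) (simp add: algebra_simps)
    also have "\<dots> = (1 - \<beta>) * (x i)\<^sup>2 + \<beta> * (x i * (\<Sum>j\<in>B. x j))"
      using assms that by (simp add: sum.distrib sum_distrib_left[symmetric] power2_eq_square)
    finally show ?thesis .
  qed
  have "(\<Sum>i\<in>B. \<Sum>j\<in>B. x i * ((1 - \<beta>) * (if i = j then 1 else 0) + \<beta>) * x j)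
      = (\<Sum>i\<in>B. (1 - \<beta>) * (x i)\<^sup>2 + \<beta> * (x i * (\<Sum>j\<in>B. x j)))"
    by (intro sum.cong refl) (rule row)
  also have "\<dots> = (1 - \<beta>) * (\<Sum>i\<in>B. (x i)\<^sup>2) + \<beta> * (\<Sum>i\<in>B. x i)\<^sup>2"
    by (simp add: sum.distrib sum_distrib_left[symmetric] sum_distrib_right[symmetric]
        power2_eq_square)
  finally show ?thesis .
qed

lemma compound_symmetry_quadratic_form_ge:
  fixes x :: "'a \<Rightarrow> real"
  assumes "finite B" "B \<noteq> {}" "\<beta> \<le> 1"
  shows "(1 / card B + (real (card B) - 1) / card B * \<beta>) * (\<Sum>i\<in>B. x i)\<^sup>2
    \<le> (1 - \<beta>) * (\<Sum>i\<in>B. (x i)\<^sup>2) + \<beta> * (\<Sum>i\<in>B. x i)\<^sup>2"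
proof -
  have card_pos: "real (card B) > 0"
    using assms by (simp add: card_gt_0_iff)
  have "(1 - \<beta>) * (\<Sum>i\<in>B. x i)\<^sup>2 \<le> (1 - \<beta>) * ((\<Sum>i\<in>B. (x i)\<^sup>2) * card B)"
    using assms(3) by (intro mult_left_mono sum_squared_le_sum_of_squares) simp
  with card_pos show ?thesis
    by (simp add: field_simps)
qed

lemma quadratic_form_with_common_offdiagonal_pos:
  fixes s a :: "nat \<Rightarrow> real"
  assumes "\<forall>k<p. m \<le> a k" "c < m" "0 < m + c * (real p - 1)" "\<exists>k<p. s k \<noteq> 0"
  shows "0 < c * (\<Sum>k<p. s k)\<^sup>2 + (\<Sum>k<p. (a k - c) * (s k)\<^sup>2)"
proof -
  have "(s k)\<^sup>2 \<le> (\<Sum>k<p. (s k)\<^sup>2)" if "k < p" for k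
    using that by (intro member_le_sum) auto
  with assms(4) have sq_pos: "0 < (\<Sum>k<p. (s k)\<^sup>2)"
    by (meson order.strict_trans2 zero_less_power2)
  have diag: "(m - c) * (\<Sum>k<p. (s k)\<^sup>2) \<le> (\<Sum>k<p. (a k - c) * (s k)\<^sup>2)"
    unfolding sum_distrib_left using assms(1) by (intro sum_mono mult_right_mono) auto
  show ?thesis
  proof (cases "c \<ge> 0")
    case True
    have "0 < (m - c) * (\<Sum>k<p. (s k)\<^sup>2)"
      using assms(2) sq_pos by simp
    with diag True show ?thesis
      by (smt (verit) zero_le_mult_iff zero_le_power2)
  next
    case False
    have "(\<Sum>k<p. s k)\<^sup>2 \<le> (\<Sum>k<p. (s k)\<^sup>2) * p"
      using sum_squared_le_sum_of_squares[of s "{..<p}"] by simp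
    with False have "c * ((\<Sum>k<p. (s k)\<^sup>2) * p) \<le> c * (\<Sum>k<p. s k)\<^sup>2"
      by (intro mult_left_mono_neg) auto
    moreover have "0 < (m + c * (real p - 1)) * (\<Sum>k<p. (s k)\<^sup>2)"
      using assms(3) sq_pos by simp
    ultimately show ?thesis
      using diag by (simp add: algebra_simps)
  qed
qed

lemma in_BI_symmetric:
  assumes "in_BI p n b c A" "i < offs n p" "j < offs n p"
  shows "A i j = A j i"
proof -
  obtain k l where "k < p" "i \<in> block n k" "l < p" "j \<in> block n l"
    using assms(2,3) ex_block_lessThan_offs by blast
  then show ?thesis
    using assms(1) by (auto simp: in_BI_def in_block_iff_mem_block)
qed

lemma in_BI_quadratic_form:
  fixes x :: "nat \<Rightarrow> real"
  assumes "in_BI p n b c A"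
  shows "(\<Sum>i<offs n p. \<Sum>j<offs n p. x i * A i j * x j)
    = c * (\<Sum>k<p. \<Sum>i\<in>block n k. x i)\<^sup>2
      + (\<Sum>k<p. (1 - b k) * (\<Sum>i\<in>block n k. (x i)\<^sup>2) + (b k - c) * (\<Sum>i\<in>block n k. x i)\<^sup>2)"
proof -
  define S where "S k = (\<Sum>i\<in>block n k. x i)" for k
  define D where "D k = (1 - b k) * (\<Sum>i\<in>block n k. (x i)\<^sup>2) + (b k - c) * (S k)\<^sup>2" for k
  have entries: "A i j = (if k = l then (1 - b k) * (if i = j then 1 else 0) + b k else c)"
    if "k < p" "l < p" "i \<in> block n k" "j \<in> block n l" for k l i j
    using assms that by (auto simp: in_BI_def in_block_iff_mem_block)
  have block_pair: "(\<Sum>i\<in>block n k. \<Sum>j\<in>block n l. x i * A i j * x j)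
      = c * S k * S l + (if k = l then D k else 0)" if "k < p" "l < p" for k l
  proof (cases "k = l")
    case True
    have "(\<Sum>i\<in>block n k. \<Sum>j\<in>block n k. x i * A i j * x j)
        = (\<Sum>i\<in>block n k. \<Sum>j\<in>block n k. x i * ((1 - b k) * (if i = j then 1 else 0) + b k) * x j)"
      using that(1) by (intro sum.cong refl) (simp add: entries)
    also have "\<dots> = (1 - b k) * (\<Sum>i\<in>block n k. (x i)\<^sup>2) + b k * (S k)\<^sup>2"
      unfolding S_def by (rule compound_symmetry_quadratic_form) simp
    also have "\<dots> = c * S k * S k + D k"
      by (simp add: D_def power2_eq_square algebra_simps)
    finally show ?thesis
      using True by simp
  next
    case False
    then have "(\<Sum>i\<in>block n k. \<Sum>j\<in>block n l. x i * A i j * x j)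
        = (\<Sum>i\<in>block n k. \<Sum>j\<in>block n l. c * (x i * x j))"
      using that False by (intro sum.cong refl) (simp add: entries[of k l])
    also have "\<dots> = c * (\<Sum>i\<in>block n k. \<Sum>j\<in>block n l. x i * x j)"
      by (simp only: sum_distrib_left)
    also have "\<dots> = c * S k * S l"
      by (simp only: S_def mult.assoc sum_product)
    finally show ?thesis
      using False by simp
  qed
  have "(\<Sum>i<offs n p. \<Sum>j<offs n p. x i * A i j * x j)
      = (\<Sum>k<p. \<Sum>l<p. \<Sum>i\<in>block n k. \<Sum>j\<in>block n l. x i * A i j * x j)"
    unfolding sum_lessThan_offs_blocks by (rule sum.cong[OF refl]) (rule sum.swap)
  also have "\<dots> = (\<Sum>k<p. \<Sum>l<p. c * S k * S l + (if k = l then D k else 0))"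
    by (intro sum.cong refl) (simp add: block_pair)
  also have "\<dots> = c * (\<Sum>k<p. S k)\<^sup>2 + (\<Sum>k<p. D k)"
  proof -
    have "(\<Sum>k<p. \<Sum>l<p. c * S k * S l) = c * (\<Sum>k<p. S k)\<^sup>2"
      unfolding power2_eq_square sum_product by (simp add: sum_distrib_left mult.assoc)
    then show ?thesis
      by (simp add: sum.distrib sum.delta')
  qed
  finally show ?thesis
    by (simp add: S_def D_def)
qed

lemma in_BI_pos_def:
  assumes BI: "in_BI p n b c A"
    and alpha_ge: "\<forall>k<p. m \<le> alpha n b k"
    and c_bounds: "c < m" "0 < m + c * (real p - 1)"
  shows "pos_def (offs n p) A"
  unfolding pos_def_def
proof (intro conjI allI impI)
  show "A i j = A j i" if "i < offs n p" "j < offs n p" for i j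
    using BI that by (rule in_BI_symmetric)
next
  fix x :: "nat \<Rightarrow> real"
  assume "\<exists>i<offs n p. x i \<noteq> 0"
  then obtain i k where i: "x i \<noteq> 0" "k < p" "i \<in> block n k"
    using ex_block_lessThan_offs by blast
  define S where "S k = (\<Sum>i\<in>block n k. x i)" for k
  define Q where "Q k = (\<Sum>i\<in>block n k. (x i)\<^sup>2)" for k
  have b_lt_1: "b k < 1" if "k < p" for k
    using BI that by (simp add: in_BI_def)
  have form: "(\<Sum>i<offs n p. \<Sum>j<offs n p. x i * A i j * x j)
      = c * (\<Sum>k<p. S k)\<^sup>2 + (\<Sum>k<p. (1 - b k) * Q k + (b k - c) * (S k)\<^sup>2)"
    using in_BI_quadratic_form[OF BI] by (simp add: S_def Q_def)
  have within: "(alpha n b k - c) * (S k)\<^sup>2 \<le> (1 - b k) * Q k + (b k - c) * (S k)\<^sup>2"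
    if "k < p" for k
  proof -
    have "n k \<ge> 1"
      using BI that by (simp add: in_BI_def)
    then have "block n k \<noteq> {}"
      by (metis card.empty card_block not_one_le_zero)
    then show ?thesis
      using compound_symmetry_quadratic_form_ge[of "block n k" "b k" x] b_lt_1[OF that]
      by (simp add: alpha_def S_def Q_def algebra_simps)
  qed
  show "0 < (\<Sum>i<offs n p. \<Sum>j<offs n p. x i * A i j * x j)"
  proof (cases "\<exists>k<p. S k \<noteq> 0")
    case True
    have "0 < c * (\<Sum>k<p. S k)\<^sup>2 + (\<Sum>k<p. (alpha n b k - c) * (S k)\<^sup>2)"
      using quadratic_form_with_common_offdiagonal_pos[OF alpha_ge c_bounds True] .
    also have "\<dots> \<le> c * (\<Sum>k<p. S k)\<^sup>2 + (\<Sum>k<p. (1 - b k) * Q k + (b k - c) * (S k)\<^sup>2)"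
      using within by (intro add_left_mono sum_mono) auto
    finally show ?thesis
      by (simp add: form)
  next
    case False
    have "0 < (x i)\<^sup>2"
      using i(1) by simp
    also have "\<dots> \<le> Q k"
      unfolding Q_def using i(3) by (intro member_le_sum) auto
    finally have "0 < (\<Sum>k<p. (1 - b k) * Q k)"
      using i(2) b_lt_1 by (intro sum_pos2[of _ k])
        (auto simp: Q_def less_imp_le intro!: mult_nonneg_nonneg sum_nonneg)
    with False show ?thesis
      by (simp add: form)
  qed
qed

theorem corollary2:
  fixes p :: nat and n :: "nat \<Rightarrow> nat" and b :: "nat \<Rightarrow> real" and c :: real
    and A :: "nat \<Rightarrow> nat \<Rightarrow> real"
  assumes "p \<ge> 2"
    and "in_BI p n b c A"
    and "\<forall>k<p. 0 < alpha n b k \<and> alpha n b k < 1"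
    and "- (Min ((alpha n b) ` {..<p})) / (real p - 1) < c"
    and "c < Min ((alpha n b) ` {..<p})"
  shows "pos_def (\<Sum>k<p. n k) A"
proof -
  define m where "m = Min ((alpha n b) ` {..<p})"
  have "\<forall>k<p. m \<le> alpha n b k"
    by (simp add: m_def)
  moreover have "0 < m + c * (real p - 1)"
    using assms(1,4) by (simp add: m_def field_simps)
  ultimately have "pos_def (offs n p) A"
    using in_BI_pos_def[OF assms(2)] assms(5) m_def by blast
  then show ?thesis
    by (simp add: offs_eq_sum)
qed

end
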